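(* Let $q$ be a prime power, $N_0=(\Gamma_q)^n$ and $t$ a positive integer. Let $x_1,\dots,x_L\in\mathbb{F}_q^n$ be pairwise distinct, let $y_1,\dots,y_L\in\mathbb{F}_q^n$ be pairwise distinct, and let $\alpha,\beta\in\mathbb{F}_q\setminus\{0\}$. If $L\ge4tN_0$, then there exists $i\in[L]$ such that $\big|\{(i',i'')\in([L]\setminus\{i\})^2:\alpha x_{i'}+\beta y_{i''}=\alpha x_i+\beta y_i\}\big|\ge t$.
   Context: $\Gamma_q:=q\,J(q)$ where $J(t)=\frac1t\min_{0<x<1}\frac{1+x+\cdots+x^{t-1}}{x^{(t-1)/3}}$. *)

theory Defs
  imports Complex_Main
begin

text \<open>J(t) = (1/t) * min over 0<x<1 of (1 + x + ... + x^(t-1)) / x^((t-1)/3).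
  The minimum is rendered as an infimum (which coincides with the minimum when attained).\<close>
definition J_fun :: "nat \<Rightarrow> real" where
  "J_fun t = (1 / real t) *
     Inf {(\<Sum>j<t. x ^ j) / x powr ((real t - 1) / 3) | x::real. 0 < x \<and> x < 1}"

definition Gamma_q :: "nat \<Rightarrow> real" where
  "Gamma_q q = real q * J_fun q"

text \<open>F_q^n, represented as functions nat => F_q vanishing at coordinates >= n.\<close>
definition Fqn :: "nat \<Rightarrow> (nat \<Rightarrow> 'a::zero) set" where
  "Fqn n = {v. \<forall>k\<ge>n. v k = 0}"

end

(*
  Suppose every index has fewer than t collisions.  Send k to the first coordinates of its
  collisions: this digraph on [L] has out-degree below t, so greedily it has an independent set S
  with L <= (2t - 1) |S|.  On S the triples (alpha x_i, beta y_j, -(alpha x_k + beta y_k)) form a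
  tricolored sum-free set in F_q^n: a vanishing sum with (i, j) <> (k, k) would be a collision of k,
  injectivity of x and y excluding the degenerate cases.  The slice rank method bounds such sets by
  Gamma_q^n: by delta(z) = 1 - z^(q-1) the diagonal tensor is a polynomial of degree at most (q-1)n,
  each monomial has a partial degree at most (q-1)n/3, so the tensor is a sum of at most
  3 |{low-degree exponent vectors}| slices; a Chernoff-type estimate bounds that count by Gamma_q^n,
  and tensor powers remove the factor 3.  Hence L <= (2t - 1) Gamma_q^n < 4 t Gamma_q^n.
*)

theory Submission
  imports Defs "HOL-Library.FuncSet" "HOL-Library.Cardinality"
begin

lemma card_UNIV_field_ge_2: "card (UNIV :: 'a::{finite,field} set) \<ge> 2"
proof -
  have "card {0::'a, 1} \<le> CARD('a)" by (rule card_mono) auto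
  then show ?thesis by simp
qed

lemma card_UNIV_field_power_le_iff:
  "card (UNIV :: 'a::{finite,field} set) ^ m \<le> CARD('a) ^ n \<longleftrightarrow> m \<le> n"
  using card_UNIV_field_ge_2[where 'a='a] by (intro power_increasing_iff) simp

lemma field_power_card_minus_one:
  fixes x :: "'a::{finite,field}"
  assumes "x \<noteq> 0"
  shows "x ^ (CARD('a) - 1) = 1"
proof -
  have "(\<Prod>y\<in>UNIV-{0}. x * y) = (\<Prod>y\<in>UNIV-{0::'a}. y)"
    by (rule prod.reindex_bij_witness[of _ "\<lambda>y. y / x" "\<lambda>y. x * y"]) (use assms in auto)
  then have "x ^ card (UNIV - {0::'a}) * (\<Prod>y\<in>UNIV-{0::'a}. y) = 1 * (\<Prod>y\<in>UNIV-{0::'a}. y)"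
    by (simp add: prod.distrib)
  then have "x ^ card (UNIV - {0::'a}) = 1"
    by (subst (asm) mult_right_cancel) auto
  then show ?thesis by (simp add: card_Diff_singleton)
qed

lemma one_minus_power_card_minus_one:
  fixes z :: "'a::{finite,field}"
  shows "1 - z ^ (CARD('a) - 1) = (if z = 0 then 1 else 0)"
  using card_UNIV_field_ge_2[where 'a='a] field_power_card_minus_one[of z] by auto

lemma card_le_card_mult_fibre_bound:
  assumes "finite B" "\<Phi> ` A \<subseteq> B" "\<And>z. z \<in> B \<Longrightarrow> card {a\<in>A. \<Phi> a = z} \<le> m"
  shows "card A \<le> card B * m"
proof -
  have "A = (\<Union>z\<in>B. {a\<in>A. \<Phi> a = z})" using assms(2) by blast
  then have "card A \<le> (\<Sum>z\<in>B. card {a\<in>A. \<Phi> a = z})"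
    by (metis card_UN_le[OF assms(1)])
  also have "\<dots> \<le> (\<Sum>z\<in>B. m)" by (intro sum_mono assms(3))
  finally show ?thesis by simp
qed

lemma card_kernel_lower_bound:
  fixes f :: "'e \<Rightarrow> 'i \<Rightarrow> 'a::{finite,field}"
  assumes I: "finite I" and E: "finite E"
  shows "CARD('a) ^ card I \<le>
     card {u \<in> I \<rightarrow>\<^sub>E UNIV. \<forall>e\<in>E. (\<Sum>i\<in>I. u i * f e i) = 0} * CARD('a) ^ card E"
proof -
  define K where "K = {u \<in> I \<rightarrow>\<^sub>E UNIV. \<forall>e\<in>E. (\<Sum>i\<in>I. u i * f e i) = (0::'a)}"
  define \<Phi> where "\<Phi> u = restrict (\<lambda>e. \<Sum>i\<in>I. u i * f e i) E" for u :: "'i \<Rightarrow> 'a"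
  have "card (I \<rightarrow>\<^sub>E (UNIV::'a set)) \<le> card (E \<rightarrow>\<^sub>E (UNIV::'a set)) * card K"
  proof (rule card_le_card_mult_fibre_bound[where \<Phi>=\<Phi>])
    show "\<Phi> ` (I \<rightarrow>\<^sub>E UNIV) \<subseteq> E \<rightarrow>\<^sub>E UNIV" unfolding \<Phi>_def by auto
    fix z
    show "card {u \<in> I \<rightarrow>\<^sub>E UNIV. \<Phi> u = z} \<le> card K"
    proof (cases "{u \<in> I \<rightarrow>\<^sub>E UNIV. \<Phi> u = z} = {}")
      case True
      show ?thesis unfolding True by simp
    next
      case False
      then obtain u0 where u0: "u0 \<in> I \<rightarrow>\<^sub>E UNIV" "\<Phi> u0 = z" by blast
      \<comment> \<open>translating by \<open>-u0\<close> embeds the fibre over \<open>z\<close> into the kernel\<close>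
      define g where "g u = restrict (\<lambda>i. u i - u0 i) I" for u :: "'i \<Rightarrow> 'a"
      have "inj_on g {u \<in> I \<rightarrow>\<^sub>E UNIV. \<Phi> u = z}"
      proof (rule inj_onI)
        fix u v assume "u \<in> {u \<in> I \<rightarrow>\<^sub>E UNIV. \<Phi> u = z}" "v \<in> {u \<in> I \<rightarrow>\<^sub>E UNIV. \<Phi> u = z}"
          and uv: "g u = g v"
        moreover have "u i = v i" if "i \<in> I" for i
          using fun_cong[OF uv, of i] that by (simp add: g_def)
        ultimately show "u = v" by (auto intro: PiE_ext)
      qed
      moreover have "g ` {u \<in> I \<rightarrow>\<^sub>E UNIV. \<Phi> u = z} \<subseteq> K"
      proof (rule image_subsetI)
        fix u assume "u \<in> {u \<in> I \<rightarrow>\<^sub>E UNIV. \<Phi> u = z}"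
        then have u: "u \<in> I \<rightarrow>\<^sub>E UNIV" "\<Phi> u = z" by auto
        have "(\<Sum>i\<in>I. u i * f e i) = (\<Sum>i\<in>I. u0 i * f e i)" if "e \<in> E" for e
          using fun_cong[OF trans[OF u(2) u0(2)[symmetric]], of e] that by (simp add: \<Phi>_def)
        then show "g u \<in> K"
          by (simp add: K_def g_def left_diff_distrib sum_subtractf)
      qed
      moreover have "finite K" unfolding K_def using I by (auto intro: finite_subset[OF _ finite_PiE])
      ultimately show ?thesis by (rule card_inj_on_le)
    qed
  qed (use E in \<open>auto intro: finite_PiE\<close>)
  then show ?thesis using I E unfolding K_def by (simp add: card_PiE mult.commute)
qed

definition linear_subspace_on :: "'i set \<Rightarrow> ('i \<Rightarrow> 'a::field) set \<Rightarrow> bool" where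
  "linear_subspace_on I K \<longleftrightarrow> K \<subseteq> I \<rightarrow>\<^sub>E UNIV \<and> K \<noteq> {} \<and>
     (\<forall>u\<in>K. \<forall>v\<in>K. \<forall>c. restrict (\<lambda>i. u i + c * v i) I \<in> K)"

definition free_coordinates :: "('i \<Rightarrow> 'a) set \<Rightarrow> 'i set \<Rightarrow> bool" where
  "free_coordinates K S \<longleftrightarrow> (\<forall>v. \<exists>k\<in>K. \<forall>i\<in>S. k i = v i)"

lemma free_coordinates_insert:
  assumes K: "linear_subspace_on I K" and S: "free_coordinates K S" "S \<subseteq> I"
    and k: "k \<in> K" "\<forall>j\<in>S. k j = 0" and i: "i \<in> I" "k i \<noteq> 0"
  shows "free_coordinates K (insert i S)"
  unfolding free_coordinates_def
proof
  fix v
  obtain k' where k': "k' \<in> K" "\<forall>j\<in>S. k' j = v j"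
    using S(1) unfolding free_coordinates_def by blast
  define kk where "kk = restrict (\<lambda>j. k' j + (v i - k' i) / k i * k j) I"
  have "kk \<in> K" using K k'(1) k(1) unfolding kk_def linear_subspace_on_def by blast
  moreover have "\<forall>j\<in>insert i S. kk j = v j"
    using k' k i S(2) by (auto simp: kk_def)
  ultimately show "\<exists>k\<in>K. \<forall>j\<in>insert i S. k j = v j" by blast
qed

lemma card_subspace_le_power_support:
  fixes K :: "('i \<Rightarrow> 'a::{finite,field}) set"
  assumes I: "finite I" and K: "linear_subspace_on I K"
  shows "\<exists>u\<in>K. card K \<le> CARD('a) ^ card {i\<in>I. u i \<noteq> 0}"
proof -
  have KI: "K \<subseteq> I \<rightarrow>\<^sub>E UNIV" using K by (simp add: linear_subspace_on_def)
  define Ss where "Ss = {S. S \<subseteq> I \<and> free_coordinates K S}"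
  have "Ss \<subseteq> Pow I" unfolding Ss_def by auto
  then have finSs: "finite Ss" using I finite_subset by blast
  have "{} \<in> Ss" using K unfolding Ss_def free_coordinates_def linear_subspace_on_def by auto
  then obtain S where S: "S \<in> Ss" and "card S = Max (card ` Ss)"
    using Max_in[of "card ` Ss"] finSs by fastforce
  then have max: "card S' \<le> card S" if "S' \<in> Ss" for S'
    using that finSs by simp
  have SI: "S \<subseteq> I" and freeS: "free_coordinates K S" using S unfolding Ss_def by auto
  have finS: "finite S" using SI I finite_subset by blast
  \<comment> \<open>by maximality of \<open>S\<close>, a vector of \<open>K\<close> vanishing on \<open>S\<close> vanishes everywhere\<close>
  have inj: "inj_on (\<lambda>k. restrict k S) K"
  proof (rule inj_onI)
    fix k1 k2 assume k12: "k1 \<in> K" "k2 \<in> K" and eq: "restrict k1 S = restrict k2 S"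
    define k where "k = restrict (\<lambda>i. k1 i + (-1) * k2 i) I"
    have kK: "k \<in> K" using K k12 unfolding k_def linear_subspace_on_def by blast
    have k0S: "\<forall>j\<in>S. k j = 0"
    proof
      fix j assume "j \<in> S"
      then show "k j = 0" using fun_cong[OF eq, of j] SI by (auto simp: k_def)
    qed
    have "k i = 0" if "i \<in> I" for i
    proof (rule ccontr)
      assume "k i \<noteq> 0"
      then have "insert i S \<in> Ss"
        using free_coordinates_insert[OF K freeS SI kK k0S \<open>i \<in> I\<close>] SI \<open>i \<in> I\<close>
        unfolding Ss_def by simp
      then have "card (insert i S) \<le> card S" by (rule max)
      moreover have "i \<notin> S" using \<open>k i \<noteq> 0\<close> k0S by blast
      ultimately show False using finS by simp
    qed
    then show "k1 = k2" using k12 KI by (intro PiE_ext[of k1 I]) (auto simp: k_def)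
  qed
  have "card K \<le> card (S \<rightarrow>\<^sub>E (UNIV::'a set))"
    by (rule card_inj_on_le[OF inj]) (use finS in \<open>auto intro: finite_PiE\<close>)
  also have "\<dots> = CARD('a) ^ card S" using finS by (simp add: card_PiE)
  finally have cK: "card K \<le> CARD('a) ^ card S" .
  obtain u where u: "u \<in> K" "\<forall>i\<in>S. u i = 1"
    using freeS unfolding free_coordinates_def by (elim allE[of _ "\<lambda>_. 1"]) blast
  have "card S \<le> card {i\<in>I. u i \<noteq> 0}" using I SI u(2) by (intro card_mono) auto
  then have "CARD('a) ^ card S \<le> CARD('a) ^ card {i\<in>I. u i \<noteq> 0}"
    by (simp only: card_UNIV_field_power_le_iff)
  with cK u(1) show ?thesis by (blast intro: le_trans)
qed

lemma card_fibre_pointwise_mult_le: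
  fixes h :: "'i \<Rightarrow> 'a::{finite,field}"
  assumes I: "finite I" and W: "W \<subseteq> I \<rightarrow>\<^sub>E UNIV"
  shows "card {w\<in>W. restrict (\<lambda>k. w k * h k) I = z} \<le> CARD('a) ^ card {k\<in>I. h k = 0}"
proof -
  let ?Z = "{k\<in>I. h k = 0}"
  have "inj_on (\<lambda>w. restrict w ?Z) {w\<in>W. restrict (\<lambda>k. w k * h k) I = z}"
  proof (rule inj_onI)
    fix v w assume v: "v \<in> {w\<in>W. restrict (\<lambda>k. w k * h k) I = z}"
      and w: "w \<in> {w\<in>W. restrict (\<lambda>k. w k * h k) I = z}" and eq: "restrict v ?Z = restrict w ?Z"
    have "v k = w k" if "k \<in> I" for k
    proof (cases "h k = 0")
      case True
      then show ?thesis using fun_cong[OF eq, of k] that by simp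
    next
      case False
      have "restrict (\<lambda>k. v k * h k) I = restrict (\<lambda>k. w k * h k) I" using v w by simp
      from fun_cong[OF this, of k] have "v k * h k = w k * h k" using that by simp
      then show ?thesis using False by simp
    qed
    then show "v = w" using v w W by (intro PiE_ext[of v I]) auto
  qed
  then have "card {w\<in>W. restrict (\<lambda>k. w k * h k) I = z} \<le> card (?Z \<rightarrow>\<^sub>E (UNIV::'a set))"
    by (rule card_inj_on_le) (simp_all add: image_subset_iff I finite_PiE)
  then show ?thesis using I by (simp add: card_PiE)
qed

lemma card_support_le_matrix_decomposition:
  fixes h :: "'i \<Rightarrow> 'a::{finite,field}" and f g :: "'e \<Rightarrow> 'i \<Rightarrow> 'a" and f' g' :: "'e' \<Rightarrow> 'i \<Rightarrow> 'a"
  assumes I: "finite I" and E: "finite E" and E': "finite E'"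
    and decomp: "\<forall>j\<in>I. \<forall>k\<in>I.
      (if j = k then h j else 0) = (\<Sum>e\<in>E. f e j * g e k) + (\<Sum>e\<in>E'. f' e k * g' e j)"
  shows "card {j\<in>I. h j \<noteq> 0} \<le> card E + card E'"
proof -
  define K where "K = {w \<in> I \<rightarrow>\<^sub>E UNIV. \<forall>e\<in>E. (\<Sum>j\<in>I. w j * f e j) = (0::'a)}"
  define Span where "Span = (\<lambda>c. restrict (\<lambda>k. \<Sum>e\<in>E'. f' e k * c e) I) ` (E' \<rightarrow>\<^sub>E (UNIV::'a set))"
  define \<Psi> where "\<Psi> w = restrict (\<lambda>k. w k * h k) I" for w :: "'i \<Rightarrow> 'a"
  have "card Span \<le> card (E' \<rightarrow>\<^sub>E (UNIV::'a set))"
    unfolding Span_def using E' by (intro card_image_le finite_PiE) auto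
  then have card_Span: "card Span \<le> CARD('a) ^ card E'" using E' by (simp add: card_PiE)
  \<comment> \<open>for \<open>w \<in> K\<close>, contracting the decomposition with \<open>w\<close> kills the first sum\<close>
  have image_K: "\<Psi> ` K \<subseteq> Span"
  proof (rule image_subsetI)
    fix w assume w: "w \<in> K"
    define c where "c = restrict (\<lambda>e. \<Sum>j\<in>I. w j * g' e j) E'"
    have "w k * h k = (\<Sum>e\<in>E'. f' e k * c e)" if k: "k \<in> I" for k
    proof -
      have "w k * h k = (\<Sum>j\<in>I. w j * (if j = k then h j else 0))"
        using I k by (simp add: if_distrib[of "\<lambda>x. w _ * x"] cong: if_cong)
      also have "\<dots> = (\<Sum>j\<in>I. w j * ((\<Sum>e\<in>E. f e j * g e k) + (\<Sum>e\<in>E'. f' e k * g' e j)))"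
        using decomp k by (intro sum.cong) auto
      also have "\<dots> = (\<Sum>e\<in>E. g e k * (\<Sum>j\<in>I. w j * f e j)) + (\<Sum>e\<in>E'. f' e k * (\<Sum>j\<in>I. w j * g' e j))"
        by (simp add: distrib_left sum.distrib sum_distrib_left sum.swap[of _ I] mult_ac)
      also have "\<dots> = (\<Sum>e\<in>E'. f' e k * c e)" using w by (simp add: K_def c_def)
      finally show ?thesis .
    qed
    then have "\<Psi> w = restrict (\<lambda>k. \<Sum>e\<in>E'. f' e k * c e) I" by (auto simp: \<Psi>_def)
    moreover have "c \<in> E' \<rightarrow>\<^sub>E UNIV" by (simp add: c_def)
    ultimately show "\<Psi> w \<in> Span" unfolding Span_def by blast
  qed
  have "card K \<le> card Span * CARD('a) ^ card {k\<in>I. h k = 0}"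
  proof (rule card_le_card_mult_fibre_bound[OF _ image_K])
    show "finite Span" unfolding Span_def using E' by (intro finite_imageI finite_PiE) auto
    show "card {w\<in>K. \<Psi> w = z} \<le> CARD('a) ^ card {k\<in>I. h k = 0}" for z
      unfolding \<Psi>_def by (rule card_fibre_pointwise_mult_le[OF I]) (auto simp: K_def)
  qed
  also have "\<dots> \<le> CARD('a) ^ card E' * CARD('a) ^ card {k\<in>I. h k = 0}"
    using card_Span by simp
  finally have "CARD('a) ^ card I \<le> CARD('a) ^ card E' * CARD('a) ^ card {k\<in>I. h k = 0} * CARD('a) ^ card E"
    using card_kernel_lower_bound[OF I E, of f] unfolding K_def by (meson le_trans mult_le_mono1)
  then have "card I \<le> card E' + card {k\<in>I. h k = 0} + card E"
    by (simp only: power_add[symmetric] card_UNIV_field_power_le_iff)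
  moreover have "card I = card {k\<in>I. h k = 0} + card {j\<in>I. h j \<noteq> 0}"
    using I by (subst card_Un_disjoint[symmetric]) (auto intro: arg_cong[where f=card])
  ultimately show ?thesis by linarith
qed

lemma card_le_slice_decomposition:
  fixes fa :: "'e1 \<Rightarrow> 'i \<Rightarrow> 'a::{finite,field}" and ga :: "'e1 \<Rightarrow> 'i \<Rightarrow> 'i \<Rightarrow> 'a"
    and fb :: "'e2 \<Rightarrow> 'i \<Rightarrow> 'a" and gb :: "'e2 \<Rightarrow> 'i \<Rightarrow> 'i \<Rightarrow> 'a"
    and fc :: "'e3 \<Rightarrow> 'i \<Rightarrow> 'a" and gc :: "'e3 \<Rightarrow> 'i \<Rightarrow> 'i \<Rightarrow> 'a"
  assumes I: "finite I" and E1: "finite E1" and E2: "finite E2" and E3: "finite E3"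
    and decomp: "\<forall>i\<in>I. \<forall>j\<in>I. \<forall>k\<in>I. (if i = j \<and> j = k then 1 else 0) =
       (\<Sum>e\<in>E1. fa e i * ga e j k) + (\<Sum>e\<in>E2. fb e j * gb e i k) + (\<Sum>e\<in>E3. fc e k * gc e i j)"
  shows "card I \<le> card E1 + card E2 + card E3"
proof -
  define K where "K = {u \<in> I \<rightarrow>\<^sub>E UNIV. \<forall>e\<in>E1. (\<Sum>i\<in>I. u i * fa e i) = (0::'a)}"
  have "linear_subspace_on I K"
    unfolding linear_subspace_on_def
  proof (intro conjI ballI allI)
    show "K \<subseteq> I \<rightarrow>\<^sub>E UNIV" "K \<noteq> {}" unfolding K_def by (auto intro!: exI[of _ "restrict (\<lambda>_. 0) I"])
    fix u v c assume "u \<in> K" "v \<in> K"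
    then show "restrict (\<lambda>i. u i + c * v i) I \<in> K"
      by (simp add: K_def distrib_right sum.distrib mult.assoc flip: sum_distrib_left)
  qed
  then obtain u where u: "u \<in> K" and card_K: "card K \<le> CARD('a) ^ card {i\<in>I. u i \<noteq> 0}"
    using card_subspace_le_power_support[OF I] by blast
  have "CARD('a) ^ card I \<le> CARD('a) ^ card {i\<in>I. u i \<noteq> 0} * CARD('a) ^ card E1"
    using card_kernel_lower_bound[OF I E1, of fa] card_K unfolding K_def by (meson le_trans mult_le_mono1)
  then have "card I \<le> card {i\<in>I. u i \<noteq> 0} + card E1"
    by (simp only: power_add[symmetric] card_UNIV_field_power_le_iff)
  \<comment> \<open>contracting the first index with \<open>u \<in> K\<close> leaves a diagonal matrix with diagonal \<open>u\<close>\<close>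
  moreover have "card {j\<in>I. u j \<noteq> 0} \<le> card E2 + card E3"
  proof (rule card_support_le_matrix_decomposition[OF I E2 E3, where f=fb
        and g="\<lambda>e k. \<Sum>i\<in>I. u i * gb e i k" and f'=fc and g'="\<lambda>e j. \<Sum>i\<in>I. u i * gc e i j"],
      intro ballI)
    fix j k assume j: "j \<in> I" and k: "k \<in> I"
    have "(if j = k then u j else 0) = (\<Sum>i\<in>I. u i * (if i = j \<and> j = k then 1 else 0))"
      using I j by (auto simp: if_distrib[of "\<lambda>x. u _ * x"] cong: if_cong)
    also have "\<dots> = (\<Sum>i\<in>I. u i * ((\<Sum>e\<in>E1. fa e i * ga e j k) + (\<Sum>e\<in>E2. fb e j * gb e i k)
        + (\<Sum>e\<in>E3. fc e k * gc e i j)))"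
      using decomp j k by (intro sum.cong) auto
    also have "\<dots> = (\<Sum>e\<in>E1. ga e j k * (\<Sum>i\<in>I. u i * fa e i))
        + (\<Sum>e\<in>E2. fb e j * (\<Sum>i\<in>I. u i * gb e i k)) + (\<Sum>e\<in>E3. fc e k * (\<Sum>i\<in>I. u i * gc e i j))"
      by (simp add: distrib_left sum.distrib sum_distrib_left sum.swap[of _ I] mult_ac)
    also have "\<dots> = (\<Sum>e\<in>E2. fb e j * (\<Sum>i\<in>I. u i * gb e i k)) + (\<Sum>e\<in>E3. fc e k * (\<Sum>i\<in>I. u i * gc e i j))"
      using u by (simp add: K_def)
    finally show "(if j = k then u j else 0) =
        (\<Sum>e\<in>E2. fb e j * (\<Sum>i\<in>I. u i * gb e i k)) + (\<Sum>e\<in>E3. fc e k * (\<Sum>i\<in>I. u i * gc e i j))" .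
  qed
  ultimately show ?thesis by linarith
qed

definition trinomial_exponents :: "nat \<Rightarrow> (nat \<times> nat \<times> nat) set" where
  "trinomial_exponents p = {e \<in> {..p} \<times> {..p} \<times> {..p}. fst e + fst (snd e) + snd (snd e) \<le> p}"

definition trinomial_monomial :: "'a::comm_ring_1 \<Rightarrow> 'a \<Rightarrow> 'a \<Rightarrow> nat \<times> nat \<times> nat \<Rightarrow> 'a" where
  "trinomial_monomial u v w e = u ^ fst e * v ^ fst (snd e) * w ^ snd (snd e)"

lemma finite_trinomial_exponents [simp]: "finite (trinomial_exponents p)"
  unfolding trinomial_exponents_def by simp

lemma trinomial_power:
  fixes u v w :: "'a::comm_ring_1"
  shows "(u + v + w) ^ p = (\<Sum>a\<le>p. \<Sum>b\<le>p - a.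
    of_nat ((p choose a) * (p - a choose b)) * trinomial_monomial u v w (a, b, p - a - b))"
proof -
  have "(u + v + w) ^ p = (\<Sum>a\<le>p. of_nat (p choose a) * u ^ a * (v + w) ^ (p - a))"
    by (simp add: add.assoc binomial_ring)
  also have "\<dots> = (\<Sum>a\<le>p. of_nat (p choose a) * u ^ a *
      (\<Sum>b\<le>p - a. of_nat (p - a choose b) * v ^ b * w ^ (p - a - b)))"
    by (simp add: binomial_ring)
  also have "\<dots> = (\<Sum>a\<le>p. \<Sum>b\<le>p - a.
      of_nat ((p choose a) * (p - a choose b)) * trinomial_monomial u v w (a, b, p - a - b))"
    unfolding sum_distrib_left by (simp add: trinomial_monomial_def mult_ac)
  finally show ?thesis .
qed

lemma one_minus_trinomial_power_expansion:
  "\<exists>C::nat \<times> nat \<times> nat \<Rightarrow> 'a::comm_ring_1. \<forall>u v w.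
     1 - (u + v + w) ^ p = (\<Sum>e\<in>trinomial_exponents p. C e * trinomial_monomial u v w e)"
proof -
  define hom where "hom = {e \<in> trinomial_exponents p. fst e + fst (snd e) + snd (snd e) = p}"
  define coeff :: "nat \<times> nat \<times> nat \<Rightarrow> 'a" where
    "coeff e = (if fst e + fst (snd e) + snd (snd e) = p
       then of_nat ((p choose fst e) * (p - fst e choose fst (snd e))) else 0)" for e
  define C where "C e = (if e = (0, 0, 0) then 1 else 0) - coeff e" for e
  have "1 - (u + v + w) ^ p = (\<Sum>e\<in>trinomial_exponents p. C e * trinomial_monomial u v w e)"
    for u v w :: 'a
  proof -
    have inj: "inj_on (\<lambda>(a, b). (a, b, p - a - b)) (SIGMA a:{..p}. {..p - a})"
      by (auto simp: inj_on_def)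
    have img: "(\<lambda>(a, b). (a, b, p - a - b)) ` (SIGMA a:{..p}. {..p - a}) = hom"
      by (auto simp: hom_def trinomial_exponents_def image_iff intro!: bexI[of _ "(_, _)"])
    have "(\<Sum>e\<in>trinomial_exponents p. coeff e * trinomial_monomial u v w e)
        = (\<Sum>e\<in>hom. coeff e * trinomial_monomial u v w e)"
      by (rule sum.mono_neutral_right) (auto simp: coeff_def hom_def)
    also have "\<dots> = (\<Sum>a\<le>p. \<Sum>b\<le>p - a.
        of_nat ((p choose a) * (p - a choose b)) * trinomial_monomial u v w (a, b, p - a - b))"
      unfolding img[symmetric] by (subst sum.reindex[OF inj]) (auto simp: sum.Sigma coeff_def intro!: sum.cong)
    finally have "(\<Sum>e\<in>trinomial_exponents p. coeff e * trinomial_monomial u v w e) = (u + v + w) ^ p"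
      by (simp add: trinomial_power)
    moreover have "(\<Sum>e\<in>trinomial_exponents p.
        (if e = (0, 0, 0) then trinomial_monomial u v w e else 0)) = 1"
      by (simp add: sum.delta trinomial_exponents_def trinomial_monomial_def)
    ultimately show ?thesis
      by (simp add: C_def left_diff_distrib sum_subtractf if_distrib[of "\<lambda>x. x * _"] cong: if_cong)
  qed
  then show ?thesis by blast
qed

definition tricolored_sum_free :: "'i set \<Rightarrow> 'c set \<Rightarrow> ('i \<Rightarrow> 'c \<Rightarrow> 'a::monoid_add) \<Rightarrow>
    ('i \<Rightarrow> 'c \<Rightarrow> 'a) \<Rightarrow> ('i \<Rightarrow> 'c \<Rightarrow> 'a) \<Rightarrow> bool" where
  "tricolored_sum_free I D a b c \<longleftrightarrow>
     (\<forall>i\<in>I. \<forall>j\<in>I. \<forall>k\<in>I. (\<forall>d\<in>D. a i d + b j d + c k d = 0) \<longleftrightarrow> i = j \<and> j = k)"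

definition low_degree_exponents :: "nat \<Rightarrow> 'c set \<Rightarrow> ('c \<Rightarrow> nat) set" where
  "low_degree_exponents p D = {m \<in> D \<rightarrow>\<^sub>E {..p}. 3 * (\<Sum>d\<in>D. m d) \<le> p * card D}"

lemma finite_low_degree_exponents: "finite D \<Longrightarrow> finite (low_degree_exponents p D)"
  unfolding low_degree_exponents_def by (rule finite_subset[of _ "D \<rightarrow>\<^sub>E {..p}"]) (auto intro: finite_PiE)

lemma diagonal_tensor_expansion:
  fixes a b c :: "'i \<Rightarrow> 'c \<Rightarrow> 'a::{finite,field}"
  defines "p \<equiv> CARD('a) - 1"
  assumes D: "finite D" and tri: "tricolored_sum_free I D a b c" and ijk: "i \<in> I" "j \<in> I" "k \<in> I"
    and C: "\<And>u v w. 1 - (u + v + w) ^ p = (\<Sum>e\<in>trinomial_exponents p. C e * trinomial_monomial u v w e)"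
  shows "(if i = j \<and> j = k then 1 else 0) = (\<Sum>E \<in> D \<rightarrow>\<^sub>E trinomial_exponents p.
           \<Prod>d\<in>D. C (E d) * trinomial_monomial (a i d) (b j d) (c k d) (E d))"
proof -
  have "(\<Prod>d\<in>D. if a i d + b j d + c k d = 0 then 1 else (0::'a)) =
      (if \<forall>d\<in>D. a i d + b j d + c k d = 0 then 1 else 0)"
    using D by (induction D rule: finite_induct) auto
  then have "(if i = j \<and> j = k then 1 else 0) = (\<Prod>d\<in>D. if a i d + b j d + c k d = 0 then 1 else (0::'a))"
    using tri ijk unfolding tricolored_sum_free_def by simp
  also have "\<dots> = (\<Prod>d\<in>D. 1 - (a i d + b j d + c k d) ^ p)"
    by (simp only: p_def one_minus_power_card_minus_one)
  also have "\<dots> = (\<Prod>d\<in>D. \<Sum>e\<in>trinomial_exponents p. C e * trinomial_monomial (a i d) (b j d) (c k d) e)"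
    by (simp add: C)
  also have "\<dots> = (\<Sum>E \<in> D \<rightarrow>\<^sub>E trinomial_exponents p.
      \<Prod>d\<in>D. C (E d) * trinomial_monomial (a i d) (b j d) (c k d) (E d))"
    by (rule prod_sum_PiE[OF D]) simp
  finally show ?thesis .
qed

lemma sum_factor_through_exponents:
  fixes z :: "'c \<Rightarrow> 'a::comm_ring_1" and R :: "('c \<Rightarrow> 'x) \<Rightarrow> 'a"
  assumes G: "finite G" and M: "finite M" and img: "\<And>E. E \<in> G \<Longrightarrow> restrict (\<lambda>d. ex (E d)) D \<in> M"
  shows "(\<Sum>E\<in>G. (\<Prod>d\<in>D. z d ^ ex (E d)) * R E) =
    (\<Sum>m\<in>M. (\<Prod>d\<in>D. z d ^ m d) * (\<Sum>E\<in>{E\<in>G. restrict (\<lambda>d. ex (E d)) D = m}. R E))"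
proof -
  have "(\<Sum>E\<in>G. (\<Prod>d\<in>D. z d ^ ex (E d)) * R E) =
      (\<Sum>m\<in>M. \<Sum>E\<in>{E\<in>G. restrict (\<lambda>d. ex (E d)) D = m}. (\<Prod>d\<in>D. z d ^ ex (E d)) * R E)"
    by (rule sum.group[OF G M, symmetric]) (use img in blast)
  also have "\<dots> = (\<Sum>m\<in>M. (\<Prod>d\<in>D. z d ^ m d) * (\<Sum>E\<in>{E\<in>G. restrict (\<lambda>d. ex (E d)) D = m}. R E))"
    by (intro sum.cong refl) (auto simp: sum_distrib_left intro!: sum.cong prod.cong)
  finally show ?thesis .
qed

lemma partial_degrees_sum_le:
  assumes "E \<in> D \<rightarrow>\<^sub>E trinomial_exponents p"
  shows "(\<Sum>d\<in>D. fst (E d)) + (\<Sum>d\<in>D. fst (snd (E d))) + (\<Sum>d\<in>D. snd (snd (E d))) \<le> p * card D"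
proof -
  have "(\<Sum>d\<in>D. fst (E d) + fst (snd (E d)) + snd (snd (E d))) \<le> (\<Sum>d\<in>D. p)"
    using assms by (intro sum_mono) (auto simp: trinomial_exponents_def dest: PiE_mem)
  then show ?thesis by (simp add: sum.distrib mult.commute)
qed

lemma partial_exponent_in_low_degree_exponents:
  assumes "E \<in> D \<rightarrow>\<^sub>E trinomial_exponents p" "ex \<in> {fst, fst \<circ> snd, snd \<circ> snd}"
    and "3 * (\<Sum>d\<in>D. ex (E d)) \<le> p * card D"
  shows "restrict (\<lambda>d. ex (E d)) D \<in> low_degree_exponents p D"
proof -
  have "ex (E d) \<le> p" if "d \<in> D" for d
  proof -
    have "E d \<in> trinomial_exponents p" using assms(1) that by (rule PiE_mem)
    then show ?thesis using assms(2) by (auto simp: trinomial_exponents_def)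
  qed
  then show ?thesis using assms(3) by (simp add: low_degree_exponents_def)
qed

lemma card_tricolored_sum_free_le:
  fixes a b c :: "'i \<Rightarrow> 'c \<Rightarrow> 'a::{finite,field}"
  assumes I: "finite I" and D: "finite D" and tri: "tricolored_sum_free I D a b c"
  shows "card I \<le> 3 * card (low_degree_exponents (CARD('a) - 1) D)"
proof -
  define p where "p = CARD('a) - 1"
  define B where "B = p * card D"
  define M where "M = low_degree_exponents p D"
  define P where "P = D \<rightarrow>\<^sub>E trinomial_exponents p"
  obtain C :: "nat \<times> nat \<times> nat \<Rightarrow> 'a" where
    C: "\<And>u v w. 1 - (u + v + w) ^ p = (\<Sum>e\<in>trinomial_exponents p. C e * trinomial_monomial u v w e)"
    using one_minus_trinomial_power_expansion by blast
  define s where "s ex E = (\<Sum>d\<in>D. ex (E d))" for ex :: "nat \<times> nat \<times> nat \<Rightarrow> nat" and E :: "'c \<Rightarrow> _"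
  define e1 :: "nat \<times> nat \<times> nat \<Rightarrow> nat" where "e1 = fst"
  define e2 :: "nat \<times> nat \<times> nat \<Rightarrow> nat" where "e2 = fst \<circ> snd"
  define e3 :: "nat \<times> nat \<times> nat \<Rightarrow> nat" where "e3 = snd \<circ> snd"
  \<comment> \<open>every monomial of \<open>\<Prod>d. 1 - (a i d + b j d + c k d)^p\<close> has degree at most \<open>B\<close>,
      so one of its three partial degrees is at most \<open>B / 3\<close>\<close>
  define G1 where "G1 = {E \<in> P. 3 * s e1 E \<le> B}"
  define G2 where "G2 = {E \<in> P. \<not> 3 * s e1 E \<le> B \<and> 3 * s e2 E \<le> B}"
  define G3 where "G3 = {E \<in> P. \<not> 3 * s e1 E \<le> B \<and> \<not> 3 * s e2 E \<le> B}"
  define CC where "CC E = (\<Prod>d\<in>D. C (E d))" for E :: "'c \<Rightarrow> _"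
  define pw where "pw z ex E = (\<Prod>d\<in>D. z d ^ ex (E d))"
    for z :: "'c \<Rightarrow> 'a" and ex :: "nat \<times> nat \<times> nat \<Rightarrow> nat" and E :: "'c \<Rightarrow> _"
  define X where "X i j k E = CC E * pw (a i) e1 E * pw (b j) e2 E * pw (c k) e3 E" for i j k E
  have finM: "finite M" unfolding M_def using D by (rule finite_low_degree_exponents)
  have finP: "finite P" unfolding P_def using D by (auto intro: finite_PiE)
  have finG: "finite G1" "finite G2" "finite G3" using finP by (auto simp: G1_def G2_def G3_def)
  have G1_M: "restrict (\<lambda>d. e1 (E d)) D \<in> M" if "E \<in> G1" for E
    using that partial_exponent_in_low_degree_exponents[of E D p e1]
    by (simp add: G1_def P_def M_def s_def B_def e1_def)
  have G2_M: "restrict (\<lambda>d. e2 (E d)) D \<in> M" if "E \<in> G2" for E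
    using that partial_exponent_in_low_degree_exponents[of E D p e2]
    by (simp add: G2_def P_def M_def s_def B_def e2_def)
  have G3_M: "restrict (\<lambda>d. e3 (E d)) D \<in> M" if E: "E \<in> G3" for E
  proof -
    have "s e1 E + s e2 E + s e3 E \<le> B"
      using partial_degrees_sum_le[of E D p] E by (simp add: G3_def P_def s_def B_def e1_def e2_def e3_def)
    then have "3 * s e3 E \<le> B" using E unfolding G3_def by auto
    then show ?thesis using partial_exponent_in_low_degree_exponents[of E D p e3] E
      by (simp add: G3_def P_def M_def s_def B_def e3_def)
  qed
  have split: "(if i = j \<and> j = k then 1 else 0) =
      (\<Sum>E\<in>G1. X i j k E) + (\<Sum>E\<in>G2. X i j k E) + (\<Sum>E\<in>G3. X i j k E)"
    if "i \<in> I" "j \<in> I" "k \<in> I" for i j k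
  proof -
    have "(if i = j \<and> j = k then 1 else 0) = (\<Sum>E\<in>P. X i j k E)"
      unfolding diagonal_tensor_expansion[OF D tri that C[unfolded p_def]] P_def p_def[symmetric]
      by (intro sum.cong refl)
        (simp add: X_def CC_def pw_def e1_def e2_def e3_def trinomial_monomial_def prod.distrib)
    also have "P = G1 \<union> G2 \<union> G3" by (auto simp: G1_def G2_def G3_def)
    also have "(\<Sum>E\<in>G1 \<union> G2 \<union> G3. X i j k E) =
        (\<Sum>E\<in>G1. X i j k E) + (\<Sum>E\<in>G2. X i j k E) + (\<Sum>E\<in>G3. X i j k E)"
    proof -
      have "G1 \<inter> G2 = {}" "(G1 \<union> G2) \<inter> G3 = {}" by (auto simp: G1_def G2_def G3_def)
      then show ?thesis using finG by (simp add: sum.union_disjoint)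
    qed
    finally show ?thesis .
  qed
  define f where "f z m = (\<Prod>d\<in>D. z d ^ m d)" for z :: "'c \<Rightarrow> 'a" and m :: "'c \<Rightarrow> nat"
  define g1 where "g1 m j k = (\<Sum>E\<in>{E\<in>G1. restrict (\<lambda>d. e1 (E d)) D = m}.
      CC E * pw (b j) e2 E * pw (c k) e3 E)" for m j k
  define g2 where "g2 m i k = (\<Sum>E\<in>{E\<in>G2. restrict (\<lambda>d. e2 (E d)) D = m}.
      CC E * pw (a i) e1 E * pw (c k) e3 E)" for m i k
  define g3 where "g3 m i j = (\<Sum>E\<in>{E\<in>G3. restrict (\<lambda>d. e3 (E d)) D = m}.
      CC E * pw (a i) e1 E * pw (b j) e2 E)" for m i j
  have "(\<Sum>E\<in>G1. X i j k E) = (\<Sum>m\<in>M. f (a i) m * g1 m j k)" for i j k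
    using sum_factor_through_exponents[where ex=e1 and D=D and z="a i"
        and R="\<lambda>E. CC E * pw (b j) e2 E * pw (c k) e3 E", OF finG(1) finM G1_M]
    by (simp add: X_def pw_def f_def g1_def mult_ac)
  moreover have "(\<Sum>E\<in>G2. X i j k E) = (\<Sum>m\<in>M. f (b j) m * g2 m i k)" for i j k
    using sum_factor_through_exponents[where ex=e2 and D=D and z="b j"
        and R="\<lambda>E. CC E * pw (a i) e1 E * pw (c k) e3 E", OF finG(2) finM G2_M]
    by (simp add: X_def pw_def f_def g2_def mult_ac)
  moreover have "(\<Sum>E\<in>G3. X i j k E) = (\<Sum>m\<in>M. f (c k) m * g3 m i j)" for i j k
    using sum_factor_through_exponents[where ex=e3 and D=D and z="c k"
        and R="\<lambda>E. CC E * pw (a i) e1 E * pw (b j) e2 E", OF finG(3) finM G3_M]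
    by (simp add: X_def pw_def f_def g3_def mult_ac)
  ultimately have "card I \<le> card M + card M + card M"
    using split by (intro card_le_slice_decomposition[OF I finM finM finM,
        where fa="\<lambda>m i. f (a i) m" and ga=g1 and fb="\<lambda>m j. f (b j) m" and gb=g2
        and fc="\<lambda>m k. f (c k) m" and gc=g3]) simp
  then show ?thesis by (simp add: M_def p_def)
qed

lemma card_low_degree_exponents_le:
  fixes x :: real
  assumes D: "finite D" and q: "q \<ge> 1" and x: "0 < x" "x < 1"
  shows "real (card (low_degree_exponents (q - 1) D)) \<le>
    ((\<Sum>j<q. x ^ j) / x powr ((real q - 1) / 3)) ^ card D"
proof -
  define p where "p = q - 1"
  define t where "t = real (p * card D) / 3"
  \<comment> \<open>Chernoff-type bound: weight each exponent vector \<open>m\<close> by \<open>x ^ (|m| - t) \<ge> 1\<close>\<close>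
  have "real (card (low_degree_exponents p D)) = (\<Sum>m\<in>low_degree_exponents p D. 1)" by simp
  also have "\<dots> \<le> (\<Sum>m\<in>low_degree_exponents p D. x powr (real (sum m D) - t))"
  proof (rule sum_mono)
    fix m assume "m \<in> low_degree_exponents p D"
    then have "3 * sum m D \<le> p * card D" by (simp add: low_degree_exponents_def)
    then have "real (3 * sum m D) \<le> real (p * card D)" by (simp only: of_nat_le_iff)
    then have "real (sum m D) - t \<le> 0" unfolding t_def by simp
    then have "x powr 0 \<le> x powr (real (sum m D) - t)" using x by (intro powr_mono') auto
    then show "1 \<le> x powr (real (sum m D) - t)" using x by simp
  qed
  also have "\<dots> \<le> (\<Sum>m\<in>D \<rightarrow>\<^sub>E {..p}. x powr (real (sum m D) - t))"
    using D by (intro sum_mono2 finite_PiE) (auto simp: low_degree_exponents_def)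
  also have "\<dots> = (\<Sum>m\<in>D \<rightarrow>\<^sub>E {..p}. (\<Prod>d\<in>D. x ^ m d) * x powr (- t))"
  proof (rule sum.cong[OF refl])
    fix m :: "'a \<Rightarrow> nat"
    have "x powr (real (sum m D) - t) = x powr real (sum m D) * x powr (- t)"
      by (simp add: powr_add[symmetric])
    also have "x powr real (sum m D) = (\<Prod>d\<in>D. x ^ m d)"
      using x powr_realpow[of x "sum m D"] by (simp add: power_sum del: of_nat_sum)
    finally show "x powr (real (sum m D) - t) = (\<Prod>d\<in>D. x ^ m d) * x powr (- t)" .
  qed
  also have "\<dots> = (\<Sum>m\<in>D \<rightarrow>\<^sub>E {..p}. (\<Prod>d\<in>D. x ^ m d)) * x powr (- t)"
    by (simp add: sum_distrib_right)
  also have "\<dots> = (\<Sum>j<q. x ^ j) ^ card D * x powr (- t)"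
  proof -
    have "{..p} = {..<q}" using q by (auto simp: p_def)
    then show ?thesis using prod_sum_PiE[OF D, of "\<lambda>_. {..<q}" "\<lambda>_ j. x ^ j"] by simp
  qed
  also have "\<dots> = ((\<Sum>j<q. x ^ j) / x powr ((real q - 1) / 3)) ^ card D"
  proof -
    have "real (card D) * ((real q - 1) / 3) = t" using q by (simp add: t_def p_def of_nat_diff)
    then have "(x powr ((real q - 1) / 3)) ^ card D = x powr t" using x by (simp add: powr_power)
    then show ?thesis by (simp only: power_divide powr_minus_divide) simp
  qed
  finally show ?thesis unfolding p_def .
qed

lemma card_low_degree_exponents_le_Gamma_pow:
  assumes D: "finite D" and q: "q \<ge> 1"
  shows "real (card (low_degree_exponents (q - 1) D)) \<le> Gamma_q q ^ card D"
proof (cases "card D = 0")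
  case True
  then have "low_degree_exponents (q - 1) D = {\<lambda>_. undefined}"
    using D by (simp add: low_degree_exponents_def)
  then show ?thesis using True by simp
next
  case False
  define S where "S = {(\<Sum>j<q. x ^ j) / x powr ((real q - 1) / 3) | x::real. 0 < x \<and> x < 1}"
  define r where "r = root (card D) (real (card (low_degree_exponents (q - 1) D)))"
  have "r \<le> Inf S"
  proof (rule cInf_greatest)
    show "S \<noteq> {}" unfolding S_def by (auto intro!: exI[of _ "1/2"])
  next
    fix y assume "y \<in> S"
    then obtain x :: real where x: "0 < x" "x < 1" and y: "y = (\<Sum>j<q. x ^ j) / x powr ((real q - 1) / 3)"
      unfolding S_def by blast
    have "0 \<le> y" unfolding y using x by (intro divide_nonneg_nonneg sum_nonneg) auto
    have "real (card (low_degree_exponents (q - 1) D)) \<le> y ^ card D"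
      unfolding y by (rule card_low_degree_exponents_le[OF D q x])
    then have "r \<le> root (card D) (y ^ card D)" unfolding r_def using False by simp
    also have "\<dots> = y" using False \<open>0 \<le> y\<close> by (simp add: real_root_power_cancel)
    finally show "r \<le> y" .
  qed
  moreover have "0 \<le> r" unfolding r_def by (rule real_root_ge_zero) simp
  ultimately have "r ^ card D \<le> Inf S ^ card D" by (intro power_mono)
  moreover have "Gamma_q q = Inf S" unfolding Gamma_q_def J_fun_def S_def using q by simp
  moreover have "r ^ card D = real (card (low_degree_exponents (q - 1) D))" unfolding r_def using False by simp
  ultimately show ?thesis by simp
qed

lemma one_le_Gamma_pow:
  assumes D: "finite D" and q: "q \<ge> 1"
  shows "1 \<le> Gamma_q q ^ card D"
proof -
  have "restrict (\<lambda>_. 0) D \<in> low_degree_exponents (q - 1) D" by (simp add: low_degree_exponents_def)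
  then have "card (low_degree_exponents (q - 1) D) \<ge> 1"
    using finite_low_degree_exponents[OF D] by (simp add: Suc_le_eq card_gt_0_iff) blast
  then show ?thesis using card_low_degree_exponents_le_Gamma_pow[OF D q] by simp
qed

lemma tricolored_sum_free_power:
  assumes tri: "tricolored_sum_free I D a b c"
  shows "tricolored_sum_free ({..<m} \<rightarrow>\<^sub>E I) ({..<m} \<times> D)
    (\<lambda>f (l, d). a (f l) d) (\<lambda>f (l, d). b (f l) d) (\<lambda>f (l, d). c (f l) d)"
  unfolding tricolored_sum_free_def
proof (intro ballI)
  fix f g h assume fgh: "f \<in> {..<m} \<rightarrow>\<^sub>E I" "g \<in> {..<m} \<rightarrow>\<^sub>E I" "h \<in> {..<m} \<rightarrow>\<^sub>E I"
  have coord: "(\<forall>d\<in>D. a (f l) d + b (g l) d + c (h l) d = 0) \<longleftrightarrow> f l = g l \<and> g l = h l"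
    if "l < m" for l
  proof -
    have "f l \<in> I" "g l \<in> I" "h l \<in> I" using fgh that by auto
    then show ?thesis using tri unfolding tricolored_sum_free_def by blast
  qed
  show "(\<forall>e\<in>{..<m} \<times> D. (case e of (l, d) \<Rightarrow> a (f l) d) + (case e of (l, d) \<Rightarrow> b (g l) d)
      + (case e of (l, d) \<Rightarrow> c (h l) d) = 0) \<longleftrightarrow> f = g \<and> g = h"
  proof
    assume "\<forall>e\<in>{..<m} \<times> D. (case e of (l, d) \<Rightarrow> a (f l) d) + (case e of (l, d) \<Rightarrow> b (g l) d)
      + (case e of (l, d) \<Rightarrow> c (h l) d) = 0"
    then have "f l = g l \<and> g l = h l" if "l < m" for l using coord[OF that] that by auto
    then show "f = g \<and> g = h" using fgh by (auto intro: PiE_ext)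
  qed (use coord in auto)
qed

lemma card_tricolored_sum_free_le_Gamma_pow:
  fixes a b c :: "'i \<Rightarrow> 'c \<Rightarrow> 'a::{finite,field}"
  assumes I: "finite I" and D: "finite D" and tri: "tricolored_sum_free I D a b c"
  shows "real (card I) \<le> Gamma_q CARD('a) ^ card D"
proof -
  define \<Gamma> where "\<Gamma> = Gamma_q CARD('a) ^ card D"
  have q: "CARD('a) \<ge> 1" using card_UNIV_field_ge_2[where 'a='a] by simp
  \<comment> \<open>the factor 3 of the slice rank bound disappears under tensor powers\<close>
  have power_bound: "real (card I) ^ m \<le> 3 * \<Gamma> ^ m" for m
  proof -
    have "card ({..<m} \<rightarrow>\<^sub>E I) \<le> 3 * card (low_degree_exponents (CARD('a) - 1) ({..<m} \<times> D))"
      by (rule card_tricolored_sum_free_le[OF _ _ tricolored_sum_free_power[OF tri]])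
        (use I D in \<open>auto intro: finite_PiE\<close>)
    then have "real (card ({..<m} \<rightarrow>\<^sub>E I)) \<le> 3 * real (card (low_degree_exponents (CARD('a) - 1) ({..<m} \<times> D)))"
      by (metis of_nat_le_iff of_nat_mult of_nat_numeral)
    also have "\<dots> \<le> 3 * Gamma_q CARD('a) ^ card ({..<m} \<times> D)"
      using card_low_degree_exponents_le_Gamma_pow[OF _ q, of "{..<m} \<times> D"] D by simp
    finally show ?thesis using I
      by (simp add: \<Gamma>_def card_PiE card_cartesian_product power_mult mult.commute[of m])
  qed
  have "1 \<le> \<Gamma>" unfolding \<Gamma>_def using one_le_Gamma_pow[OF D q] .
  show ?thesis
  proof (rule ccontr)
    assume "\<not> real (card I) \<le> Gamma_q CARD('a) ^ card D"
    then have "1 < real (card I) / \<Gamma>" using \<open>1 \<le> \<Gamma>\<close> by (simp add: \<Gamma>_def)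
    then obtain m where "3 < (real (card I) / \<Gamma>) ^ m" using real_arch_pow by blast
    moreover have "0 < \<Gamma> ^ m" using \<open>1 \<le> \<Gamma>\<close> by simp
    ultimately have "3 * \<Gamma> ^ m < real (card I) ^ m" by (simp add: power_divide pos_less_divide_eq)
    with power_bound[of m] show False by linarith
  qed
qed

lemma exists_vertex_small_total_degree:
  fixes N :: "'v \<Rightarrow> 'v set"
  assumes V: "finite V" "V \<noteq> {}" and out: "\<forall>v\<in>V. card (N v \<inter> V) \<le> r"
  shows "\<exists>v\<in>V. card (N v \<inter> V) + card {u\<in>V. v \<in> N u} \<le> 2 * r"
proof (rule ccontr)
  assume "\<not> ?thesis"
  then have "(\<Sum>v\<in>V. 2 * r + 1) \<le> (\<Sum>v\<in>V. card (N v \<inter> V) + card {u\<in>V. v \<in> N u})"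
    by (intro sum_mono) (auto simp: not_le)
  then have "card V * (2 * r + 1) \<le> (\<Sum>v\<in>V. card (N v \<inter> V)) + (\<Sum>v\<in>V. card {u\<in>V. v \<in> N u})"
    by (simp add: sum.distrib)
  also have "(\<Sum>v\<in>V. card {u\<in>V. v \<in> N u}) = (\<Sum>v\<in>V. card (N v \<inter> V))"
  proof -
    have "(\<Sum>v\<in>V. card {u\<in>V. v \<in> N u}) = (\<Sum>v\<in>V. \<Sum>u\<in>V. if v \<in> N u then 1 else 0)"
      using V by (simp add: sum.If_cases Int_def)
    also have "\<dots> = (\<Sum>u\<in>V. \<Sum>v\<in>V. if v \<in> N u then 1 else 0)" by (rule sum.swap)
    also have "\<dots> = (\<Sum>u\<in>V. card (N u \<inter> V))"
      using V by (simp add: sum.If_cases Int_def conj_commute)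
    finally show ?thesis .
  qed
  also have "(\<Sum>v\<in>V. card (N v \<inter> V)) \<le> card V * r"
    using sum_mono[of V "\<lambda>v. card (N v \<inter> V)" "\<lambda>_. r"] out by simp
  finally have "card V * (2 * r + 1) \<le> card V * r + card V * r" by simp
  then show False using V by (simp add: algebra_simps)
qed

lemma exists_independent_set_of_bounded_outdegree:
  fixes N :: "'v \<Rightarrow> 'v set"
  assumes "finite V" and "\<forall>v\<in>V. card (N v \<inter> V) \<le> r"
  shows "\<exists>S\<subseteq>V. (\<forall>u\<in>S. \<forall>w\<in>S. u \<noteq> w \<longrightarrow> w \<notin> N u) \<and> card V \<le> (2 * r + 1) * card S"
  using assms
proof (induction "card V" arbitrary: V rule: less_induct)
  case less
  show ?case
  proof (cases "V = {}")
    case False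
    \<comment> \<open>greedily pick a vertex of small total degree and discard its neighbours\<close>
    obtain v where v: "v \<in> V" and deg_v: "card (N v \<inter> V) + card {u\<in>V. v \<in> N u} \<le> 2 * r"
      using exists_vertex_small_total_degree[OF less.prems(1) False less.prems(2)] by blast
    define V' where "V' = V - {v} - (N v \<inter> V) - {u\<in>V. v \<in> N u}"
    have V'V: "V' \<subseteq> V" unfolding V'_def by blast
    have smaller: "card V' < card V" using v less.prems(1) unfolding V'_def by (intro psubset_card_mono) auto
    have "finite V'" using V'V less.prems(1) by (rule finite_subset)
    have out_V': "\<forall>u\<in>V'. card (N u \<inter> V') \<le> r"
    proof
      fix u assume "u \<in> V'"
      have "card (N u \<inter> V') \<le> card (N u \<inter> V)" using V'V less.prems(1) by (intro card_mono) auto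
      moreover have "card (N u \<inter> V) \<le> r" using less.prems(2) V'V \<open>u \<in> V'\<close> by blast
      ultimately show "card (N u \<inter> V') \<le> r" by linarith
    qed
    obtain S' where S': "S' \<subseteq> V'" "\<forall>u\<in>S'. \<forall>w\<in>S'. u \<noteq> w \<longrightarrow> w \<notin> N u"
      "card V' \<le> (2 * r + 1) * card S'"
      using less.hyps[OF smaller \<open>finite V'\<close> out_V'] by blast
    have "V \<subseteq> insert v (V' \<union> (N v \<inter> V) \<union> {u\<in>V. v \<in> N u})" unfolding V'_def by blast
    then have "card V \<le> card (insert v (V' \<union> (N v \<inter> V) \<union> {u\<in>V. v \<in> N u}))"
      using less.prems(1) V'V finite_subset by (intro card_mono) auto
    also have "\<dots> \<le> Suc (card (V' \<union> (N v \<inter> V) \<union> {u\<in>V. v \<in> N u}))"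
      using V'V less.prems(1) by (simp add: card_insert_if finite_subset)
    also have "\<dots> \<le> Suc (card V' + card (N v \<inter> V) + card {u\<in>V. v \<in> N u})"
      using card_Un_le[of V' "N v \<inter> V"] card_Un_le[of "V' \<union> (N v \<inter> V)" "{u\<in>V. v \<in> N u}"] by simp
    finally have "card V \<le> card V' + 2 * r + 1" using deg_v by linarith
    moreover have "card (insert v S') = Suc (card S')"
      using S'(1) \<open>finite V'\<close> finite_subset unfolding V'_def by (subst card_insert_disjoint) auto
    ultimately have "card V \<le> (2 * r + 1) * card (insert v S')"
      using S'(3) by simp
    moreover have "\<forall>u\<in>insert v S'. \<forall>w\<in>insert v S'. u \<noteq> w \<longrightarrow> w \<notin> N u"
      using S'(1,2) unfolding V'_def by blast
    moreover have "insert v S' \<subseteq> V" using S'(1) V'V v by blast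
    ultimately show ?thesis by blast
  qed simp
qed

definition sum_collisions ::
    "'a::semiring \<Rightarrow> 'a \<Rightarrow> ('i \<Rightarrow> 'c \<Rightarrow> 'a) \<Rightarrow> ('i \<Rightarrow> 'c \<Rightarrow> 'a) \<Rightarrow> 'i set \<Rightarrow> 'i \<Rightarrow> ('i \<times> 'i) set" where
  "sum_collisions \<alpha> \<beta> x y V i = {(i', i''). i' \<in> V - {i} \<and> i'' \<in> V - {i} \<and>
     (\<lambda>k. \<alpha> * x i' k + \<beta> * y i'' k) = (\<lambda>k. \<alpha> * x i k + \<beta> * y i k)}"

lemma finite_sum_collisions: "finite V \<Longrightarrow> finite (sum_collisions \<alpha> \<beta> x y V i)"
  unfolding sum_collisions_def by (rule finite_subset[of _ "V \<times> V"]) auto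

lemma tricolored_sum_free_of_collision_free:
  fixes x y :: "'i \<Rightarrow> nat \<Rightarrow> 'a::field"
  assumes x: "\<forall>i\<in>V. x i \<in> Fqn n" "inj_on x V" and y: "\<forall>i\<in>V. y i \<in> Fqn n" "inj_on y V"
    and \<alpha>\<beta>: "\<alpha> \<noteq> 0" "\<beta> \<noteq> 0" and S: "S \<subseteq> V"
    and collision_free: "\<forall>i\<in>S. \<forall>k\<in>S. i \<noteq> k \<longrightarrow> i \<notin> fst ` sum_collisions \<alpha> \<beta> x y V k"
  shows "tricolored_sum_free S {..<n}
    (\<lambda>i d. \<alpha> * x i d) (\<lambda>i d. \<beta> * y i d) (\<lambda>i d. - (\<alpha> * x i d + \<beta> * y i d))"
  unfolding tricolored_sum_free_def
proof (intro ballI iffI)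
  fix i j k assume ijk: "i \<in> S" "j \<in> S" "k \<in> S"
  then have ijkV: "i \<in> V" "j \<in> V" "k \<in> V" using S by auto
  assume zero: "\<forall>d\<in>{..<n}. \<alpha> * x i d + \<beta> * y j d + - (\<alpha> * x k d + \<beta> * y k d) = 0"
  have eq: "(\<lambda>d. \<alpha> * x i d + \<beta> * y j d) = (\<lambda>d. \<alpha> * x k d + \<beta> * y k d)"
  proof
    fix d
    show "\<alpha> * x i d + \<beta> * y j d = \<alpha> * x k d + \<beta> * y k d"
    proof (cases "d < n")
      case True
      then show ?thesis using zero by (simp add: add_eq_0_iff2 flip: diff_conv_add_uminus)
    next
      case False
      then have "x i d = 0" "y j d = 0" "x k d = 0" "y k d = 0"
        using x(1) y(1) ijkV unfolding Fqn_def by auto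
      then show ?thesis by simp
    qed
  qed
  have "i = k"
  proof (rule ccontr)
    assume "i \<noteq> k"
    moreover have "j \<noteq> k"
    proof
      assume "j = k"
      then have "x i = x k" using eq \<alpha>\<beta>(1) by (auto simp: fun_eq_iff)
      then show False using \<open>i \<noteq> k\<close> x(2) ijkV by (auto dest: inj_onD)
    qed
    ultimately have "(i, j) \<in> sum_collisions \<alpha> \<beta> x y V k"
      using eq ijkV by (simp add: sum_collisions_def)
    then have "i \<in> fst ` sum_collisions \<alpha> \<beta> x y V k" by (rule rev_image_eqI) simp
    then show False using collision_free ijk(1,3) \<open>i \<noteq> k\<close> by blast
  qed
  moreover from this have "y j = y k" using eq \<alpha>\<beta>(2) by (auto simp: fun_eq_iff)
  then have "j = k" using y(2) ijkV by (auto dest: inj_onD)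
  ultimately show "i = j \<and> j = k" by simp
qed auto

theorem lemma6p1:
  fixes x y :: "nat \<Rightarrow> nat \<Rightarrow> 'a::{finite,field}"
    and \<alpha> \<beta> :: 'a and n t L :: nat
  assumes "t > 0"
    and "\<forall>i\<in>{1..L}. x i \<in> Fqn n"
    and "\<forall>i\<in>{1..L}. y i \<in> Fqn n"
    and "inj_on x {1..L}"
    and "inj_on y {1..L}"
    and "\<alpha> \<noteq> 0" and "\<beta> \<noteq> 0"
    and "real L \<ge> 4 * real t * (Gamma_q (card (UNIV :: 'a set))) ^ n"
  shows "\<exists>i\<in>{1..L}. card {(i', i''). i' \<in> {1..L} - {i} \<and> i'' \<in> {1..L} - {i} \<and>
            (\<lambda>k. \<alpha> * x i' k + \<beta> * y i'' k) = (\<lambda>k. \<alpha> * x i k + \<beta> * y i k)} \<ge> t"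
proof (rule ccontr)
  define \<Gamma> where "\<Gamma> = Gamma_q CARD('a) ^ n"
  define N where "N k = fst ` sum_collisions \<alpha> \<beta> x y {1..L} k" for k
  assume no_witness: "\<not> ?thesis"
  have "card (N k \<inter> {1..L}) \<le> t - 1" if "k \<in> {1..L}" for k
  proof -
    have fin: "finite (sum_collisions \<alpha> \<beta> x y {1..L} k)" by (simp add: finite_sum_collisions)
    then have "card (N k \<inter> {1..L}) \<le> card (N k)" by (intro card_mono) (auto simp: N_def)
    also have "\<dots> \<le> card (sum_collisions \<alpha> \<beta> x y {1..L} k)" unfolding N_def by (rule card_image_le[OF fin])
    finally have "card (N k \<inter> {1..L}) \<le> card (sum_collisions \<alpha> \<beta> x y {1..L} k)" .
    moreover have "\<not> t \<le> card (sum_collisions \<alpha> \<beta> x y {1..L} k)"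
      using that no_witness unfolding sum_collisions_def by blast
    ultimately show ?thesis by linarith
  qed
  then obtain S where S: "S \<subseteq> {1..L}" "\<forall>u\<in>S. \<forall>w\<in>S. u \<noteq> w \<longrightarrow> w \<notin> N u"
    and L_le: "L \<le> (2 * (t - 1) + 1) * card S"
    using exists_independent_set_of_bounded_outdegree[of "{1..L}" N "t - 1"] by auto
  have "tricolored_sum_free S {..<n}
      (\<lambda>i d. \<alpha> * x i d) (\<lambda>i d. \<beta> * y i d) (\<lambda>i d. - (\<alpha> * x i d + \<beta> * y i d))"
  proof (rule tricolored_sum_free_of_collision_free[OF assms(2,4,3,5,6,7) S(1)])
    show "\<forall>i\<in>S. \<forall>k\<in>S. i \<noteq> k \<longrightarrow> i \<notin> fst ` sum_collisions \<alpha> \<beta> x y {1..L} k"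
    proof (intro ballI impI)
      fix i k assume "i \<in> S" "k \<in> S" "i \<noteq> k"
      then show "i \<notin> fst ` sum_collisions \<alpha> \<beta> x y {1..L} k"
        using S(2)[rule_format, of k i] by (simp add: N_def)
    qed
  qed
  then have "real (card S) \<le> \<Gamma>"
    using card_tricolored_sum_free_le_Gamma_pow[OF finite_subset[OF S(1)] finite_lessThan]
    by (simp add: \<Gamma>_def)
  then have "(2 * real t - 1) * real (card S) \<le> (2 * real t - 1) * \<Gamma>"
    using \<open>t > 0\<close> by (intro mult_left_mono) auto
  moreover have "real L \<le> (2 * real t - 1) * real (card S)"
  proof -
    have "real (2 * (t - 1) + 1) = 2 * real t - 1" using \<open>t > 0\<close> by (simp add: of_nat_diff)
    then show ?thesis using L_le by (metis of_nat_le_iff of_nat_mult)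
  qed
  ultimately have "4 * real t * \<Gamma> \<le> (2 * real t - 1) * \<Gamma>"
    using assms(8) unfolding \<Gamma>_def by linarith
  then have "(2 * real t + 1) * \<Gamma> \<le> 0" by (simp add: algebra_simps)
  moreover have "1 \<le> \<Gamma>"
    using one_le_Gamma_pow[of "{..<n}" "CARD('a)"] card_UNIV_field_ge_2[where 'a='a] by (simp add: \<Gamma>_def)
  then have "0 < (2 * real t + 1) * \<Gamma>" by (intro mult_pos_pos) auto
  ultimately show False by linarith
qed
end
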